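(* Let $\mathbf{L}\colon\mathbb{R}^n\times\mathbb{R}^m\to\mathbb{R}$ be convex-concave and $L$-smooth, and write $\mathbb{A}=\nabla_{\pm}\mathbf{L}$. Fix $N\ge1$ and $0<\alpha\le\frac1L$. Given $x_0\in\mathbb{R}^n\times\mathbb{R}^m$ and $z_0=0$, define for $k=0,1,\dots,N-1$ (Dual Fast Extragradient) \[ \begin{aligned} x_{k+1/2}&=x_k-\alpha z_k-\alpha\mathbb{A}x_k,\\ x_{k+1}&=x_{k+1/2}-\tfrac{N-k-1}{N-k}\,\alpha\left(\mathbb{A}x_{k+1/2}-\mathbb{A}x_k\right),\\ z_{k+1}&=\tfrac{N-k-1}{N-k}\,z_k-\tfrac{1}{N-k}\,\mathbb{A}x_{k+1/2}. \end{aligned} \] Then for every saddle point $x_\star$ of $\mathbf{L}$ (equivalently $\nabla_\pm\mathbf{L}(x_\star)=0$), \[ \|\nabla\mathbf{L}(x_N)\|^2=\|\mathbb{A}x_N\|^2\le\frac{4\|x_0-x_\star\|^2}{\alpha^2N^2}. \]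
   Context: $\mathbf{L}$ is convex-concave if $\mathbf{L}(\cdot,v)$ is convex for each $v$ and $\mathbf{L}(u,\cdot)$ is concave for each $u$; it is $L$-smooth if differentiable with $L$-Lipschitz gradient. The saddle operator is $\nabla_\pm\mathbf{L}(u,v)=(\nabla_u\mathbf{L}(u,v),-\nabla_v\mathbf{L}(u,v))$, with joint variable $x=(u,v)$. *)

theory Defs
  imports "HOL-Analysis.Analysis"
begin

definition convex_concave :: "('u::real_vector \<times> 'v::real_vector \<Rightarrow> real) \<Rightarrow> bool" where
  "convex_concave L \<longleftrightarrow>
     (\<forall>v. convex_on UNIV (\<lambda>u. L (u, v))) \<and> (\<forall>u. concave_on UNIV (\<lambda>v. L (u, v)))"

definition is_gradient :: "('a::real_inner \<Rightarrow> real) \<Rightarrow> ('a \<Rightarrow> 'a) \<Rightarrow> bool" where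
  "is_gradient L G \<longleftrightarrow> (\<forall>x. (L has_derivative (\<lambda>h. G x \<bullet> h)) (at x))"

definition smooth_with_grad :: "real \<Rightarrow> ('a::real_inner \<Rightarrow> real) \<Rightarrow> ('a \<Rightarrow> 'a) \<Rightarrow> bool" where
  "smooth_with_grad Lc L G \<longleftrightarrow> is_gradient L G \<and> (\<forall>x y. norm (G x - G y) \<le> Lc * norm (x - y))"

definition saddle_op :: "('u \<times> 'v \<Rightarrow> 'u \<times> 'v::real_vector) \<Rightarrow> 'u \<times> 'v \<Rightarrow> 'u \<times> 'v" where
  "saddle_op G x = (fst (G x), - snd (G x))"

definition saddle_point :: "('u \<times> 'v \<Rightarrow> real) \<Rightarrow> 'u \<times> 'v \<Rightarrow> bool" where
  "saddle_point L xs \<longleftrightarrow>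
     (\<forall>u v. L (fst xs, v) \<le> L xs \<and> L xs \<le> L (u, snd xs))"

end

theory Submission
  imports Defs
begin

text \<open>
  Scale the iteration by writing \<open>w\<^sub>k = \<alpha> z\<^sub>k\<close> and \<open>B = \<alpha> \<bbbA>\<close>, and put \<open>y = x\<^sub>N\<close>,
  \<open>v = B x\<^sub>N\<close>. The quantity
  \<open>\<Phi>\<^sub>k = 4/(N - k) \<langle>x\<^sub>k - y, w\<^sub>k + v\<rangle> - 2 \<parallel>w\<^sub>k + v\<parallel>\<^sup>2\<close>
  does not increase along the iteration: \<open>\<Phi>\<^sub>k - \<Phi>\<^sub>k\<^sub>+\<^sub>1\<close> is a positive combination of
  \<open>\<parallel>x\<^sub>k - x\<^sub>k\<^sub>+\<^sub>1\<^sub>/\<^sub>2\<parallel>\<^sup>2 - \<parallel>B x\<^sub>k - B x\<^sub>k\<^sub>+\<^sub>1\<^sub>/\<^sub>2\<parallel>\<^sup>2\<close>, which is nonnegative because \<open>B\<close> is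
  nonexpansive (\<open>\<alpha> \<le> 1/L\<close>), and of \<open>\<langle>v - B x\<^sub>k\<^sub>+\<^sub>1\<^sub>/\<^sub>2, y - x\<^sub>k\<^sub>+\<^sub>1\<^sub>/\<^sub>2\<rangle>\<close>, which is nonnegative
  because \<open>\<bbbA>\<close> is monotone. The last step gives \<open>\<Phi>\<^sub>N\<^sub>-\<^sub>1 \<ge> 0\<close> directly, so
  \<open>\<Phi>\<^sub>0 = 4/N \<langle>x\<^sub>0 - x\<^sub>N, v\<rangle> - 2\<parallel>v\<parallel>\<^sup>2 \<ge> 0\<close>. Monotonicity at a zero \<open>x\<^sub>\<star>\<close> of \<open>\<bbbA>\<close> and
  Cauchy-Schwarz turn this into \<open>N \<parallel>v\<parallel> \<le> 2 \<parallel>x\<^sub>0 - x\<^sub>\<star>\<parallel>\<close>.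
\<close>

lemma convex_on_has_derivative_ge:
  fixes f :: "'a::real_normed_vector \<Rightarrow> real"
  assumes convex: "convex_on UNIV f" and deriv: "(f has_derivative f') (at x)"
  shows "f x + f' (y - x) \<le> f y"
proof -
  define p where "p = (\<lambda>t::real. f (x + t *\<^sub>R (y - x)))"
  have "convex_on UNIV p"
  proof (rule convex_onI)
    fix t a b :: real
    assume "0 < t" "t < 1"
    moreover have "x + ((1 - t) * a + t * b) *\<^sub>R (y - x)
        = (1 - t) *\<^sub>R (x + a *\<^sub>R (y - x)) + t *\<^sub>R (x + b *\<^sub>R (y - x))"
      by (simp add: algebra_simps)
    ultimately show "p ((1 - t) *\<^sub>R a + t *\<^sub>R b) \<le> (1 - t) * p a + t * p b"
      unfolding p_def using convex_onD[OF convex, of t] by simp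
  qed simp
  moreover have "(p has_field_derivative f' (y - x)) (at 0)"
  proof -
    have "((\<lambda>t. x + t *\<^sub>R (y - x)) has_derivative (\<lambda>t. t *\<^sub>R (y - x))) (at 0)"
      by (auto intro!: derivative_eq_intros)
    from has_derivative_compose[OF this, of f f'] deriv
    have "(p has_derivative (\<lambda>t. f' (t *\<^sub>R (y - x)))) (at 0)"
      by (simp add: p_def)
    then show ?thesis
      using linear_scale[OF has_derivative_linear[OF deriv]]
      by (simp add: has_field_derivative_def mult_commute_abs)
  qed
  ultimately have "f' (y - x) * (1 - 0) \<le> p 1 - p 0"
    by (intro convex_on_imp_above_tangent) auto
  then show ?thesis by (simp add: p_def)
qed

lemma is_gradient_has_derivative_fst:
  fixes L :: "'u::real_inner \<times> 'v::real_inner \<Rightarrow> real"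
  assumes "is_gradient L G"
  shows "((\<lambda>u'. L (u', v)) has_derivative (\<lambda>h. fst (G (u, v)) \<bullet> h)) (at u)"
proof -
  have "((\<lambda>u'. (u', v)) has_derivative (\<lambda>h. (h, 0))) (at u)"
    by (auto intro!: derivative_eq_intros)
  moreover have "(L has_derivative (\<lambda>h. G (u, v) \<bullet> h)) (at (u, v))"
    using assms unfolding is_gradient_def by blast
  ultimately show ?thesis
    using has_derivative_compose by (fastforce simp: inner_prod_def)
qed

lemma is_gradient_has_derivative_snd:
  fixes L :: "'u::real_inner \<times> 'v::real_inner \<Rightarrow> real"
  assumes "is_gradient L G"
  shows "((\<lambda>v'. L (u, v')) has_derivative (\<lambda>h. snd (G (u, v)) \<bullet> h)) (at v)"
proof -
  have "((\<lambda>v'. (u, v')) has_derivative (\<lambda>h. (0, h))) (at v)"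
    by (auto intro!: derivative_eq_intros)
  moreover have "(L has_derivative (\<lambda>h. G (u, v) \<bullet> h)) (at (u, v))"
    using assms unfolding is_gradient_def by blast
  ultimately show ?thesis
    using has_derivative_compose by (fastforce simp: inner_prod_def)
qed

lemma convex_concave_tangent_fst:
  fixes L :: "'u::real_inner \<times> 'v::real_inner \<Rightarrow> real"
  assumes "convex_concave L" and "is_gradient L G"
  shows "L (u, v) + fst (G (u, v)) \<bullet> (u' - u) \<le> L (u', v)"
proof -
  have "convex_on UNIV (\<lambda>u'. L (u', v))"
    using assms(1) by (simp add: convex_concave_def)
  from convex_on_has_derivative_ge[OF this is_gradient_has_derivative_fst[OF assms(2)]]
  show ?thesis .
qed

lemma convex_concave_tangent_snd:
  fixes L :: "'u::real_inner \<times> 'v::real_inner \<Rightarrow> real"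
  assumes "convex_concave L" and "is_gradient L G"
  shows "L (u, v') \<le> L (u, v) + snd (G (u, v)) \<bullet> (v' - v)"
proof -
  have "convex_on UNIV (\<lambda>v'. - L (u, v'))"
    using assms(1) by (simp add: convex_concave_def concave_on_def)
  moreover have "((\<lambda>v'. - L (u, v')) has_derivative (\<lambda>h. - (snd (G (u, v)) \<bullet> h))) (at v)"
    using has_derivative_minus[OF is_gradient_has_derivative_snd[OF assms(2)]] .
  ultimately have "- L (u, v) + - (snd (G (u, v)) \<bullet> (v' - v)) \<le> - L (u, v')"
    by (rule convex_on_has_derivative_ge)
  then show ?thesis by simp
qed

lemma saddle_op_monotone:
  fixes L :: "'u::real_inner \<times> 'v::real_inner \<Rightarrow> real"
  assumes "convex_concave L" and "is_gradient L G"
  shows "0 \<le> (saddle_op G p - saddle_op G q) \<bullet> (p - q)"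
proof -
  obtain u v u' v' where "p = (u, v)" "q = (u', v')" by fastforce
  with convex_concave_tangent_fst[OF assms, of u v u'] convex_concave_tangent_fst[OF assms, of u' v' u]
    convex_concave_tangent_snd[OF assms, of u v' v] convex_concave_tangent_snd[OF assms, of u' v v']
  show ?thesis
    by (simp add: saddle_op_def inner_diff_left inner_diff_right)
qed

lemma saddle_point_saddle_op_zero:
  fixes L :: "'u::real_inner \<times> 'v::real_inner \<Rightarrow> real"
  assumes "is_gradient L G" and "saddle_point L xs"
  shows "saddle_op G xs = 0"
proof -
  obtain us vs where xs: "xs = (us, vs)" by fastforce
  have "(\<lambda>h. fst (G xs) \<bullet> h) = (\<lambda>h. 0)"
    unfolding xs
    by (rule differential_zero_maxmin[OF UNIV_I open_UNIV is_gradient_has_derivative_fst[OF assms(1)]])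
       (use assms(2) in \<open>simp add: saddle_point_def xs\<close>)
  moreover have "(\<lambda>h. snd (G xs) \<bullet> h) = (\<lambda>h. 0)"
    unfolding xs
    by (rule differential_zero_maxmin[OF UNIV_I open_UNIV is_gradient_has_derivative_snd[OF assms(1)]])
       (use assms(2) in \<open>simp add: saddle_point_def xs\<close>)
  ultimately have "fst (G xs) = 0" "snd (G xs) = 0"
    by (metis inner_eq_zero_iff)+
  then show ?thesis by (simp add: saddle_op_def prod_eq_iff)
qed

lemma norm_saddle_op: "norm (saddle_op G p) = norm (G p)"
  by (cases "G p") (simp add: saddle_op_def norm_Pair)

lemma norm_saddle_op_diff: "norm (saddle_op G p - saddle_op G q) = norm (G p - G q)"
  by (cases "G p"; cases "G q") (simp add: saddle_op_def norm_Pair norm_minus_commute)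

lemma smooth_with_grad_saddle_op_step:
  assumes "smooth_with_grad Lc L G" and "0 < Lc" and "0 \<le> \<alpha>" and "\<alpha> \<le> 1 / Lc"
  shows "\<alpha> * norm (saddle_op G p - saddle_op G q) \<le> norm (p - q)"
proof -
  have "norm (G p - G q) \<le> Lc * norm (p - q)"
    using assms(1) unfolding smooth_with_grad_def by blast
  then have "\<alpha> * norm (saddle_op G p - saddle_op G q) \<le> \<alpha> * (Lc * norm (p - q))"
    using assms(3) by (simp add: norm_saddle_op_diff mult_left_mono)
  also have "\<dots> = (\<alpha> * Lc) * norm (p - q)" by simp
  also have "\<dots> \<le> norm (p - q)"
    using assms(2-4) by (intro mult_left_le_one_le) (simp_all add: field_simps)
  finally show ?thesis .
qed

lemma lyapunov_step_identity:
  fixes x xh y v w g h :: "'a::real_inner" and n :: real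
  assumes "1 < n" and "xh = x - w - g"
  shows "4 / n * ((x - y) \<bullet> (w + v)) - 2 * (norm (w + v))\<^sup>2
         - (4 / (n - 1) * ((xh - ((n - 1) / n) *\<^sub>R (h - g) - y)
                              \<bullet> (((n - 1) / n) *\<^sub>R w - (1 / n) *\<^sub>R h + v))
            - 2 * (norm (((n - 1) / n) *\<^sub>R w - (1 / n) *\<^sub>R h + v))\<^sup>2)
       = 2 / n\<^sup>2 * ((norm (x - xh))\<^sup>2 - (norm (g - h))\<^sup>2)
         + 4 / (n * (n - 1)) * ((v - h) \<bullet> (y - xh))"
proof -
  have "n \<noteq> 0" "n - 1 \<noteq> 0" using assms(1) by auto
  then show ?thesis unfolding assms(2) power2_norm_eq_inner
    by (simp add: inner_add_left inner_add_right inner_diff_left inner_diff_right inner_commute)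
       (simp add: field_simps power2_eq_square)
qed

locale dual_fast_extragradient =
  fixes A :: "'a::real_inner \<Rightarrow> 'a" and \<alpha> :: real and N :: nat
    and x xh z :: "nat \<Rightarrow> 'a"
  assumes A_monotone: "\<And>p q. 0 \<le> (A p - A q) \<bullet> (p - q)"
    and step_size: "\<And>p q. \<alpha> * norm (A p - A q) \<le> norm (p - q)"
    and \<alpha>_pos: "0 < \<alpha>" and N_pos: "1 \<le> N"
    and z0: "z 0 = 0"
    and half: "\<And>k. k < N \<Longrightarrow> xh k = x k - \<alpha> *\<^sub>R z k - \<alpha> *\<^sub>R A (x k)"
    and xstep: "\<And>k. k < N \<Longrightarrow>
        x (Suc k) = xh k - ((real N - real k - 1) / (real N - real k) * \<alpha>) *\<^sub>R
                             (A (xh k) - A (x k))"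
    and zstep: "\<And>k. k < N \<Longrightarrow>
        z (Suc k) = ((real N - real k - 1) / (real N - real k)) *\<^sub>R z k
                    - (1 / (real N - real k)) *\<^sub>R A (xh k)"
begin

definition lyapunov :: "nat \<Rightarrow> real" where
  "lyapunov k = 4 / (real N - real k) * ((x k - x N) \<bullet> (\<alpha> *\<^sub>R z k + \<alpha> *\<^sub>R A (x N)))
                - 2 * (norm (\<alpha> *\<^sub>R z k + \<alpha> *\<^sub>R A (x N)))\<^sup>2"

lemma half_step_gap:
  assumes "k < N"
  shows "(norm (\<alpha> *\<^sub>R A (x k) - \<alpha> *\<^sub>R A (xh k)))\<^sup>2 \<le> (norm (x k - xh k))\<^sup>2"
proof -
  have "norm (\<alpha> *\<^sub>R A (x k) - \<alpha> *\<^sub>R A (xh k)) \<le> norm (x k - xh k)"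
    using step_size \<alpha>_pos by (simp flip: scaleR_diff_right)
  then show ?thesis by (simp add: power_mono)
qed

lemma scaled_A_monotone: "0 \<le> (\<alpha> *\<^sub>R A p - \<alpha> *\<^sub>R A q) \<bullet> (p - q)"
  using A_monotone \<alpha>_pos by (simp flip: scaleR_diff_right)

lemma lyapunov_decreasing:
  assumes "Suc k < N"
  shows "lyapunov (Suc k) \<le> lyapunov k"
proof -
  define n where "n = real N - real k"
  have k: "k < N" and n: "1 < n" using assms by (auto simp: n_def)
  have "lyapunov k - lyapunov (Suc k)
      = 2 / n\<^sup>2 * ((norm (x k - xh k))\<^sup>2 - (norm (\<alpha> *\<^sub>R A (x k) - \<alpha> *\<^sub>R A (xh k)))\<^sup>2)
        + 4 / (n * (n - 1)) * ((\<alpha> *\<^sub>R A (x N) - \<alpha> *\<^sub>R A (xh k)) \<bullet> (x N - xh k))"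
  proof -
    have x_Suc: "x (Suc k) = xh k - ((n - 1) / n) *\<^sub>R (\<alpha> *\<^sub>R A (xh k) - \<alpha> *\<^sub>R A (x k))"
      using xstep[OF k] by (simp add: n_def scaleR_diff_right algebra_simps)
    have z_Suc: "\<alpha> *\<^sub>R z (Suc k) = ((n - 1) / n) *\<^sub>R (\<alpha> *\<^sub>R z k) - (1 / n) *\<^sub>R (\<alpha> *\<^sub>R A (xh k))"
      unfolding zstep[OF k] by (simp add: n_def scaleR_diff_right)
    have N_Suc: "real N - real (Suc k) = n - 1" by (simp add: n_def)
    show ?thesis
      unfolding lyapunov_def n_def[symmetric] x_Suc z_Suc N_Suc
      by (rule lyapunov_step_identity[OF n half[OF k]])
  qed
  moreover have "0 \<le> 2 / n\<^sup>2 * ((norm (x k - xh k))\<^sup>2 - (norm (\<alpha> *\<^sub>R A (x k) - \<alpha> *\<^sub>R A (xh k)))\<^sup>2)"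
    using half_step_gap[OF k] by simp
  moreover have "0 \<le> 4 / (n * (n - 1)) * ((\<alpha> *\<^sub>R A (x N) - \<alpha> *\<^sub>R A (xh k)) \<bullet> (x N - xh k))"
    using n scaled_A_monotone by simp
  ultimately show ?thesis by linarith
qed

lemma lyapunov_last_nonneg: "0 \<le> lyapunov (N - 1)"
proof -
  define k where "k = N - 1"
  have k: "k < N" "Suc k = N" "real N - real k = 1" using N_pos by (auto simp: k_def)
  have xN: "x N = xh k" using xstep[OF k(1)] by (simp add: k)
  have "lyapunov k = 4 * ((x k - x N) \<bullet> (\<alpha> *\<^sub>R z k + \<alpha> *\<^sub>R A (x N)))
      - 2 * (norm (\<alpha> *\<^sub>R z k + \<alpha> *\<^sub>R A (x N)))\<^sup>2"
    by (simp add: lyapunov_def k(3))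
  also have "\<dots> = 2 * ((norm (x k - x N))\<^sup>2
      - (norm (x k - x N - (\<alpha> *\<^sub>R z k + \<alpha> *\<^sub>R A (x N))))\<^sup>2)"
    by (simp add: power2_norm_eq_inner inner_diff_left inner_diff_right inner_commute)
  also have "\<dots> = 2 * ((norm (x k - xh k))\<^sup>2 - (norm (\<alpha> *\<^sub>R A (x k) - \<alpha> *\<^sub>R A (xh k)))\<^sup>2)"
    using half[OF k(1)] by (simp add: xN)
  finally show ?thesis
    using half_step_gap[OF k(1)] by (simp add: k_def)
qed

lemma lyapunov_initial_nonneg: "0 \<le> lyapunov 0"
proof -
  have "0 \<le> lyapunov k" if "k \<le> N - 1" for k
    using that
  proof (induction rule: inc_induct)
    case base
    show ?case by (rule lyapunov_last_nonneg)
  next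
    case (step k)
    then have "Suc k < N" by linarith
    with lyapunov_decreasing step.IH show ?case by fastforce
  qed
  then show ?thesis by simp
qed

lemma residual_bound:
  assumes "A xs = 0"
  shows "real N * norm (\<alpha> *\<^sub>R A (x N)) \<le> 2 * norm (x 0 - xs)"
proof -
  define v where "v = \<alpha> *\<^sub>R A (x N)"
  have "0 \<le> v \<bullet> (x N - xs)"
    using scaled_A_monotone[of "x N" xs] by (simp add: v_def assms)
  then have "(x 0 - x N) \<bullet> v \<le> norm (x 0 - xs) * norm v"
    using norm_cauchy_schwarz[of "x 0 - xs" v]
    by (simp add: inner_diff_left inner_diff_right inner_commute)
  moreover have "2 * (norm v)\<^sup>2 \<le> 4 / real N * ((x 0 - x N) \<bullet> v)"
    using lyapunov_initial_nonneg by (simp add: lyapunov_def z0 v_def)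
  ultimately have "real N * (norm v)\<^sup>2 \<le> 2 * norm (x 0 - xs) * norm v"
    using N_pos by (simp add: field_simps)
  then show ?thesis
    by (cases "norm v = 0") (auto simp: v_def power2_eq_square mult.assoc)
qed

lemma residual_sq_bound:
  assumes "A xs = 0"
  shows "(norm (A (x N)))\<^sup>2 \<le> 4 * (norm (x 0 - xs))\<^sup>2 / (\<alpha>\<^sup>2 * (real N)\<^sup>2)"
proof -
  have "(real N * \<alpha> * norm (A (x N)))\<^sup>2 \<le> (2 * norm (x 0 - xs))\<^sup>2"
    using residual_bound[OF assms] \<alpha>_pos by (intro power_mono) (simp_all add: mult.assoc)
  then show ?thesis
    using \<alpha>_pos N_pos by (simp add: pos_le_divide_eq power_mult_distrib algebra_simps)
qed

end

theorem theorem6p1: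
  fixes L :: "(real ^ 'n) \<times> (real ^ 'm) \<Rightarrow> real"
    and G :: "(real ^ 'n) \<times> (real ^ 'm) \<Rightarrow> (real ^ 'n) \<times> (real ^ 'm)"
    and Lc \<alpha> :: real and N :: nat
    and x xh z :: "nat \<Rightarrow> (real ^ 'n) \<times> (real ^ 'm)"
    and xs :: "(real ^ 'n) \<times> (real ^ 'm)"
  assumes cc: "convex_concave L"
    and Lpos: "Lc > 0"
    and smooth: "smooth_with_grad Lc L G"
    and N: "N \<ge> 1"
    and \<alpha>pos: "0 < \<alpha>" and \<alpha>le: "\<alpha> \<le> 1 / Lc"
    and z0: "z 0 = 0"
    and half: "\<And>k. k < N \<Longrightarrow>
        xh k = x k - \<alpha> *\<^sub>R z k - \<alpha> *\<^sub>R saddle_op G (x k)"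
    and xstep: "\<And>k. k < N \<Longrightarrow>
        x (Suc k) = xh k - ((real N - real k - 1) / (real N - real k) * \<alpha>) *\<^sub>R
                             (saddle_op G (xh k) - saddle_op G (x k))"
    and zstep: "\<And>k. k < N \<Longrightarrow>
        z (Suc k) = ((real N - real k - 1) / (real N - real k)) *\<^sub>R z k
                    - (1 / (real N - real k)) *\<^sub>R saddle_op G (xh k)"
    and sp: "saddle_point L xs"
  shows "norm (G (x N)) = norm (saddle_op G (x N)) \<and>
         (norm (saddle_op G (x N)))\<^sup>2 \<le> 4 * (norm (x 0 - xs))\<^sup>2 / (\<alpha>\<^sup>2 * (real N)\<^sup>2)"
proof -
  have grad: "is_gradient L G"
    using smooth by (simp add: smooth_with_grad_def)
  interpret dual_fast_extragradient "saddle_op G" \<alpha> N x xh z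
    using saddle_op_monotone[OF cc grad] smooth_with_grad_saddle_op_step[OF smooth Lpos _ \<alpha>le]
      \<alpha>pos N z0 half xstep zstep
    by unfold_locales auto
  show ?thesis
    using residual_sq_bound[OF saddle_point_saddle_op_zero[OF grad sp]] by (simp add: norm_saddle_op)
qed

end
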